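(* Let $N$ be a finite set, $r\notin N$, $V=N\cup\{r\}$, and let $G=(V,E)$ be the complete graph on $V$ with edge weights $w:E\to\mathbb{R}$ taking the distinct values $w_1<\dots<w_k$. Assume that for every $i<k$ there is no violated cycle in $G_i$. Let $u,v\in N$ be distinct and $S\in\mathcal{S}_{uv}$. If $S\not\subseteq\hat N(uv)$, then $f_{uv}(S)=0$.
   Context: For $S\subseteq V$, $\mathrm{mst}(S)$ is the weight of a minimum spanning tree of $G[S]$. $\mathcal{S}_{uv}=\{S\subseteq V: r\in S,\ u,v\notin S\}$ and $f_{uv}(S)=\mathrm{mst}(S\cup\{u\})+\mathrm{mst}(S\cup\{v\})-\mathrm{mst}(S)-\mathrm{mst}(S\cup\{u,v\})$. $\hat N(uv)$ (expensive neighborhood of $uv$) is the set of vertices $s\in V\setminus\{u,v\}$ with $\max\{w(su),w(sv)\}>w(uv)$. $E_i=\{e\in E:w(e)\le w_i\}$, $G_i=(V,E_i)$. For a cycle $C$ in $G_i$ and a chord $f=xy$ of $C$ in $G_i$, with $P_1,P_2$ the two $x$-$y$ paths of $C$, $f$ covers $C$ if $w(f)\ge w(e)$ for all $e\in E(P_1)$ or for all $e\in E(P_2)$; $C$ is well-covered if covered by all its chords. A violated cycle in $G_i$ is a well-covered cycle of $G_i$ containing two vertices non-adjacent in $G_i$ and a vertex $x\ne r$ with $rx\notin E_i$. *)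

theory Defs
  imports Complex_Main
begin

definition all_edges :: "'a set \<Rightarrow> 'a set set" where
  "all_edges V = {{x, y} | x y. x \<in> V \<and> y \<in> V \<and> x \<noteq> y}"

definition spanning_tree :: "'a set \<Rightarrow> 'a set set \<Rightarrow> bool" where
  "spanning_tree S T \<longleftrightarrow> T \<subseteq> all_edges S \<and> card T = card S - 1 \<and>
     (\<forall>x\<in>S. \<forall>y\<in>S. (x, y) \<in> {(a, b). {a, b} \<in> T}\<^sup>*)"

definition mst :: "('a set \<Rightarrow> real) \<Rightarrow> 'a set \<Rightarrow> real" where
  "mst w S = Min {sum w T | T. spanning_tree S T}"

definition f_uv :: "('a set \<Rightarrow> real) \<Rightarrow> 'a \<Rightarrow> 'a \<Rightarrow> 'a set \<Rightarrow> real" where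
  "f_uv w u v S = mst w (insert u S) + mst w (insert v S) - mst w S - mst w (insert u (insert v S))"

definition S_fam :: "'a set \<Rightarrow> 'a \<Rightarrow> 'a \<Rightarrow> 'a \<Rightarrow> 'a set set" where
  "S_fam V r u v = {S. S \<subseteq> V \<and> r \<in> S \<and> u \<notin> S \<and> v \<notin> S}"

definition exp_nbhd :: "('a set \<Rightarrow> real) \<Rightarrow> 'a set \<Rightarrow> 'a \<Rightarrow> 'a \<Rightarrow> 'a set" where
  "exp_nbhd w V u v = {s \<in> V - {u, v}. max (w {s, u}) (w {s, v}) > w {u, v}}"

(* Cycles in a graph with vertex set V and edge set Es, represented by a list cs of
   distinct vertices v_0,...,v_{n-1} (n \<ge> 3), with edges {v_j, v_{(j+1) mod n}}. *)
definition cyc_edge :: "'a list \<Rightarrow> nat \<Rightarrow> 'a set" where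
  "cyc_edge cs j = {cs ! j, cs ! ((j + 1) mod length cs)}"

definition is_cycle :: "'a set \<Rightarrow> 'a set set \<Rightarrow> 'a list \<Rightarrow> bool" where
  "is_cycle V Es cs \<longleftrightarrow> distinct cs \<and> length cs \<ge> 3 \<and> set cs \<subseteq> V \<and>
     (\<forall>j < length cs. cyc_edge cs j \<in> Es)"

definition is_chord :: "'a set set \<Rightarrow> 'a list \<Rightarrow> nat \<Rightarrow> nat \<Rightarrow> bool" where
  "is_chord Es cs a b \<longleftrightarrow> a < b \<and> b < length cs \<and> {cs ! a, cs ! b} \<in> Es \<and>
     {cs ! a, cs ! b} \<notin> {cyc_edge cs j | j. j < length cs}"

(* the two cs!a - cs!b paths of the cycle use the cycle edges with indices in
   {a..<b} and in {0..<length cs} - {a..<b}, respectively *)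
definition covers :: "('a set \<Rightarrow> real) \<Rightarrow> 'a list \<Rightarrow> nat \<Rightarrow> nat \<Rightarrow> bool" where
  "covers w cs a b \<longleftrightarrow>
     (\<forall>j \<in> {a..<b}. w (cyc_edge cs j) \<le> w {cs ! a, cs ! b}) \<or>
     (\<forall>j \<in> {0..<length cs} - {a..<b}. w (cyc_edge cs j) \<le> w {cs ! a, cs ! b})"

definition well_covered :: "('a set \<Rightarrow> real) \<Rightarrow> 'a set set \<Rightarrow> 'a list \<Rightarrow> bool" where
  "well_covered w Es cs \<longleftrightarrow> (\<forall>a b. is_chord Es cs a b \<longrightarrow> covers w cs a b)"

definition violated_cycle :: "('a set \<Rightarrow> real) \<Rightarrow> 'a set \<Rightarrow> 'a set set \<Rightarrow> 'a \<Rightarrow> 'a list \<Rightarrow> bool" where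
  "violated_cycle w V Es r cs \<longleftrightarrow> is_cycle V Es cs \<and> well_covered w Es cs \<and>
     (\<exists>x\<in>set cs. \<exists>y\<in>set cs. x \<noteq> y \<and> {x, y} \<notin> Es) \<and>
     (\<exists>x\<in>set cs. x \<noteq> r \<and> {r, x} \<notin> Es)"

(* E_i for threshold value c = w_i *)
definition thr_edges :: "('a set \<Rightarrow> real) \<Rightarrow> 'a set \<Rightarrow> real \<Rightarrow> 'a set set" where
  "thr_edges w V c = {e \<in> all_edges V. w e \<le> c}"

end

theory Submission
  imports Defs
begin

(* Kruskal's algorithm gives a layer-cake formula for minimum spanning trees: with weights
   w_1 < ... < w_k and c_i(X) the number of components of G_i[X],
     mst(X) = w_1 (|X| - 1) + \<Sum>\<^sub>i (w_(i+1) - w_i) (c_i(X) - 1),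
   since every spanning tree of G[X] has at least c_i(X) - 1 edges heavier than w_i, and
   Kruskal's tree attains all these bounds at once. Hence f_uv(S) is a combination with
   nonnegative coefficients of the brackets c_i(S+u) + c_i(S+v) - c_i(S) - c_i(S+u+v), i < k.
   Counting how components merge when u and v are added, a bracket vanishes as soon as at most
   one component of G_i[S] is adjacent to both u and v, and one is if uv is an edge of G_i.
   A vertex s of S outside the expensive neighbourhood supplies that component whenever uv is in
   G_i. Two such components would carry chordless v-u paths whose union is a cycle of G_i with
   uv as its only possible chord; routing one path through s when uv is present makes that
   chord covered, so the cycle would be violated. *)

section \<open>Connected components\<close>

definition edge_rel :: "'a set \<Rightarrow> 'a set set \<Rightarrow> ('a \<times> 'a) set" where
  "edge_rel X F = {(a, b). a \<in> X \<and> b \<in> X \<and> {a, b} \<in> F}"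

definition component :: "'a set \<Rightarrow> 'a set set \<Rightarrow> 'a \<Rightarrow> 'a set" where
  "component X F x = (edge_rel X F)\<^sup>* `` {x}"

definition components :: "'a set \<Rightarrow> 'a set set \<Rightarrow> 'a set set" where
  "components X F = component X F ` X"

abbreviation num_components :: "'a set \<Rightarrow> 'a set set \<Rightarrow> nat" where
  "num_components X F \<equiv> card (components X F)"

lemma component_refl [simp]: "x \<in> component X F x"
  by (simp add: component_def)

lemma component_sym: "y \<in> component X F x \<Longrightarrow> x \<in> component X F y"
proof -
  have "sym (edge_rel X F)"
    by (auto simp: sym_def edge_rel_def insert_commute)
  then show "y \<in> component X F x \<Longrightarrow> x \<in> component X F y"
    using sym_rtrancl unfolding component_def sym_def by blast
qed

lemma component_eq: "y \<in> component X F x \<Longrightarrow> component X F y = component X F x"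
  using component_sym[of y X F x] unfolding component_def by (auto intro: rtrancl_trans)

lemma component_edge: "a \<in> X \<Longrightarrow> b \<in> X \<Longrightarrow> {a, b} \<in> F \<Longrightarrow> b \<in> component X F a"
  by (auto simp: component_def edge_rel_def)

lemma component_subset_closed:
  assumes "x \<in> Z" and "\<And>y z. y \<in> Z \<Longrightarrow> (y, z) \<in> edge_rel X F \<Longrightarrow> z \<in> Z"
  shows "component X F x \<subseteq> Z"
proof -
  have "(edge_rel X F)\<^sup>* `` Z = Z"
    using assms(2) by (intro Image_closed_trancl) blast
  then show ?thesis
    using assms(1) unfolding component_def by blast
qed

lemma component_eqI:
  assumes "x \<in> C" and "C \<subseteq> component X F x"
    and "\<And>y z. y \<in> C \<Longrightarrow> (y, z) \<in> edge_rel X F \<Longrightarrow> z \<in> C"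
  shows "component X F x = C"
  using component_subset_closed[of x C X F] assms by blast

lemma component_subset: "x \<in> X \<Longrightarrow> component X F x \<subseteq> X"
  by (rule component_subset_closed) (auto simp: edge_rel_def)

lemma component_mono: "X \<subseteq> Y \<Longrightarrow> F \<subseteq> G \<Longrightarrow> component X F x \<subseteq> component Y G x"
proof -
  assume "X \<subseteq> Y" "F \<subseteq> G"
  then have "edge_rel X F \<subseteq> edge_rel Y G"
    by (auto simp: edge_rel_def)
  then show ?thesis
    unfolding component_def using rtrancl_mono by blast
qed

lemma component_in_components [simp]: "x \<in> X \<Longrightarrow> component X F x \<in> components X F"
  by (simp add: components_def)

lemma finite_components: "finite X \<Longrightarrow> finite (components X F)"
  by (simp add: components_def)

lemma components_subset: "C \<in> components X F \<Longrightarrow> C \<subseteq> X"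
  by (auto simp: components_def dest: component_subset)

lemma component_of_mem_components: "C \<in> components X F \<Longrightarrow> y \<in> C \<Longrightarrow> component X F y = C"
  by (clarsimp simp: components_def) (rule component_eq)

lemma components_no_edge:
  assumes "C1 \<in> components X F" "C2 \<in> components X F" "C1 \<noteq> C2" "x \<in> C1" "y \<in> C2"
  shows "{x, y} \<notin> F"
proof
  assume "{x, y} \<in> F"
  then have "y \<in> component X F x"
    using assms components_subset by (blast intro: component_edge)
  then show False
    using component_eq component_of_mem_components[OF assms(1,4)]
      component_of_mem_components[OF assms(2,5)] assms(3) by metis
qed

lemma components_disjoint:
  "C1 \<in> components X F \<Longrightarrow> C2 \<in> components X F \<Longrightarrow> C1 \<noteq> C2 \<Longrightarrow> C1 \<inter> C2 = {}"
  using component_of_mem_components by (metis disjoint_iff)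

lemma card_insert_Diff_subset:
  assumes "finite P" "K \<subseteq> P" "M \<notin> P - K"
  shows "card (insert M (P - K)) + card K = card P + 1"
proof -
  have "card K \<le> card P"
    using assms(1,2) by (rule card_mono)
  moreover have "card (P - K) = card P - card K"
    using assms(1,2) by (intro card_Diff_subset) (auto intro: finite_subset)
  ultimately show ?thesis
    using assms by simp
qed

lemma components_eq_insert_Diff:
  assumes "X \<subseteq> Y" "Y - M \<subseteq> X" "M \<in> components Y G"
    and new: "\<And>x. x \<in> Y \<Longrightarrow> component Y G x = (if x \<in> M then M else component X F x)"
    and old: "\<And>x. x \<in> X \<Longrightarrow> x \<in> M \<longleftrightarrow> component X F x \<in> K"
  shows "components Y G = insert M (components X F - K)"
proof (intro equalityI subsetI)
  fix C assume "C \<in> components Y G"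
  then obtain x where "x \<in> Y" "C = component Y G x"
    by (auto simp: components_def)
  then show "C \<in> insert M (components X F - K)"
    using new[of x] old[of x] assms(2) by (cases "x \<in> M") auto
next
  fix C assume "C \<in> insert M (components X F - K)"
  then consider "C = M" | x where "x \<in> X" "C = component X F x" "x \<notin> M"
    using old by (auto simp: components_def)
  then show "C \<in> components Y G"
    using assms(1,3) new by cases (auto simp: components_def)
qed

lemma component_insert_edge_self:
  fixes F :: "'a set set"
  assumes "a \<in> X" "b \<in> X"
  shows "component X (insert {a, b} F) a = component X F a \<union> component X F b"
proof (rule component_eqI)
  let ?F = "insert {a, b} F"
  have "b \<in> component X ?F a"
    using assms by (auto intro: component_edge)
  then show "component X F a \<union> component X F b \<subseteq> component X ?F a"
    using component_mono[of X X F ?F a] component_mono[of X X F ?F b] component_eq[of b X ?F a]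
    by blast
  fix y z assume y: "y \<in> component X F a \<union> component X F b" and yz: "(y, z) \<in> edge_rel X ?F"
  show "z \<in> component X F a \<union> component X F b"
  proof (cases "{y, z} = {a, b}")
    case False
    with yz have "z \<in> component X F y"
      by (auto simp: edge_rel_def intro: component_edge)
    then show ?thesis
      using y component_eq[of y X F a] component_eq[of y X F b] by blast
  qed (auto simp: doubleton_eq_iff)
qed simp

lemma component_insert_edge:
  fixes F :: "'a set set"
  assumes "a \<in> X" "b \<in> X"
  defines "U \<equiv> component X F a \<union> component X F b"
  shows "component X (insert {a, b} F) x = (if x \<in> U then U else component X F x)"
proof (cases "x \<in> U")
  case True
  then show ?thesis
    using component_insert_edge_self[OF assms(1,2)] component_eq[of x X "insert {a, b} F" a]
    unfolding U_def by simp
next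
  case False
  have "z \<in> component X F x"
    if y: "y \<in> component X F x" and yz: "(y, z) \<in> edge_rel X (insert {a, b} F)" for y z
  proof -
    have "x \<in> component X F y"
      using y by (rule component_sym)
    with False have "{y, z} \<noteq> {a, b}"
      unfolding U_def by (auto simp: doubleton_eq_iff)
    with yz have "z \<in> component X F y"
      by (auto simp: edge_rel_def intro: component_edge)
    then show ?thesis
      using component_eq[OF y] by simp
  qed
  then have "component X (insert {a, b} F) x = component X F x"
    using component_mono[of X X F "insert {a, b} F" x] by (intro component_eqI) auto
  with False show ?thesis
    by simp
qed

lemma components_insert_edge:
  fixes F :: "'a set set"
  assumes "a \<in> X" "b \<in> X"
  shows "components X (insert {a, b} F) =
    insert (component X F a \<union> component X F b)
      (components X F - {component X F a, component X F b})"
proof (rule components_eq_insert_Diff[OF order_refl])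
  let ?U = "component X F a \<union> component X F b"
  show "X - ?U \<subseteq> X"
    by blast
  show "?U \<in> components X (insert {a, b} F)"
    using component_insert_edge_self[OF assms] assms(1) unfolding components_def by blast
  show "component X (insert {a, b} F) x = (if x \<in> ?U then ?U else component X F x)" for x
    using assms by (rule component_insert_edge)
  show "x \<in> ?U \<longleftrightarrow> component X F x \<in> {component X F a, component X F b}" for x
  proof
    show "x \<in> ?U \<Longrightarrow> component X F x \<in> {component X F a, component X F b}"
      using component_eq[of x X F a] component_eq[of x X F b] by blast
    show "component X F x \<in> {component X F a, component X F b} \<Longrightarrow> x \<in> ?U"
      by (metis UnI1 UnI2 component_refl empty_iff insert_iff)
  qed
qed

lemma num_components_insert_edge:
  fixes F :: "'a set set"
  assumes "finite X" "a \<in> X" "b \<in> X"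
  shows "num_components X (insert {a, b} F) + card {component X F a, component X F b}
    = num_components X F + 1"
proof -
  let ?U = "component X F a \<union> component X F b"
  let ?K = "{component X F a, component X F b}"
  have "?U \<notin> components X F - ?K"
  proof
    assume U: "?U \<in> components X F - ?K"
    then have "component X F a = ?U"
      by (intro component_of_mem_components) auto
    with U show False
      by blast
  qed
  then show ?thesis
    unfolding components_insert_edge[OF assms(2,3)]
  proof (rule card_insert_Diff_subset[rotated 2])
    show "finite (components X F)"
      using assms(1) by (rule finite_components)
    show "?K \<subseteq> components X F"
      using assms(2,3) by simp
  qed
qed

definition touching :: "'a set \<Rightarrow> 'a set set \<Rightarrow> 'a \<Rightarrow> 'a set set" where
  "touching X F u = {C \<in> components X F. \<exists>y\<in>C. {u, y} \<in> F}"

lemma touching_subset_components: "touching X F u \<subseteq> components X F"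
  by (simp add: touching_def)

lemma finite_touching: "finite X \<Longrightarrow> finite (touching X F u)"
  using finite_subset[OF touching_subset_components finite_components] .

lemma component_in_touching: "y \<in> X \<Longrightarrow> {u, y} \<in> F \<Longrightarrow> component X F y \<in> touching X F u"
  unfolding touching_def using component_refl[of y X F] by auto

lemma touching_subset_component_insert_vertex:
  fixes F :: "'a set set"
  shows "insert u (\<Union>(touching X F u)) \<subseteq> component (insert u X) F u"
proof
  let ?X = "insert u X"
  fix y assume "y \<in> insert u (\<Union>(touching X F u))"
  then consider "y = u" | C c where "C \<in> components X F" "y \<in> C" "c \<in> C" "{u, c} \<in> F"
    unfolding touching_def by blast
  then show "y \<in> component ?X F u"
  proof cases
    case 2
    then have "c \<in> component ?X F u"
      using components_subset[OF 2(1)] by (intro component_edge) auto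
    moreover have "y \<in> component ?X F c"
      using component_mono[of X ?X F F c] component_of_mem_components[OF 2(1,3)] 2(2) by blast
    ultimately show ?thesis
      using component_eq[of c ?X F u] by simp
  qed simp
qed

lemma component_insert_vertex_self:
  fixes F :: "'a set set"
  assumes "u \<notin> X"
  shows "component (insert u X) F u = insert u (\<Union>(touching X F u))"
proof (rule component_eqI[OF _ touching_subset_component_insert_vertex])
  let ?X = "insert u X" and ?M = "insert u (\<Union>(touching X F u))"
  fix y z assume "y \<in> ?M" "(y, z) \<in> edge_rel ?X F"
  then have z: "z \<in> ?X" and yz: "{y, z} \<in> F"
    by (auto simp: edge_rel_def)
  show "z \<in> ?M"
  proof (cases "z = u")
    case False
    with z have "z \<in> X"
      by simp
    show ?thesis
    proof (cases "y = u")
      case True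
      then have "component X F z \<in> touching X F u"
        using \<open>z \<in> X\<close> yz by (intro component_in_touching) auto
      then show ?thesis
        using component_refl[of z X F] by blast
    next
      case False
      then obtain C where C: "C \<in> touching X F u" "y \<in> C"
        using \<open>y \<in> ?M\<close> by blast
      have C_comp: "C \<in> components X F"
        using touching_subset_components[of X F u] C(1) by blast
      then have "z \<in> component X F y"
        using C(2) \<open>z \<in> X\<close> yz components_subset by (intro component_edge) auto
      then have "z \<in> C"
        using component_of_mem_components[OF C_comp C(2)] by simp
      then show ?thesis
        using C(1) by blast
    qed
  qed simp
qed simp

lemma component_insert_vertex:
  fixes F :: "'a set set"
  assumes "u \<notin> X" "x \<in> insert u X"
  defines "M \<equiv> insert u (\<Union>(touching X F u))"
  shows "component (insert u X) F x = (if x \<in> M then M else component X F x)"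
proof (cases "x \<in> M")
  case True
  then show ?thesis
    using component_insert_vertex_self[OF assms(1)] component_eq[of x "insert u X" F u]
    unfolding M_def by simp
next
  case False
  then have "x \<in> X"
    using assms(2) by (auto simp: M_def)
  have "z \<in> component X F x" if "y \<in> component X F x" "(y, z) \<in> edge_rel (insert u X) F" for y z
  proof -
    have "y \<in> X"
      using that(1) component_subset[OF \<open>x \<in> X\<close>] by blast
    have z: "z \<in> insert u X" and yz: "{y, z} \<in> F"
      using that(2) by (auto simp: edge_rel_def)
    have "z \<noteq> u"
    proof
      assume "z = u"
      then have "component X F y \<in> touching X F u"
        using \<open>y \<in> X\<close> yz by (intro component_in_touching) (auto simp: insert_commute)
      then have "x \<in> M"
        using component_eq[OF that(1)] unfolding M_def by auto
      with False show False
        by simp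
    qed
    with z have "z \<in> component X F y"
      using \<open>y \<in> X\<close> yz by (intro component_edge) auto
    then show ?thesis
      using component_eq[OF that(1)] by simp
  qed
  then have "component (insert u X) F x = component X F x"
    using component_mono[of X "insert u X" F F x] by (intro component_eqI) auto
  with False show ?thesis
    by simp
qed

lemma components_insert_vertex:
  fixes F :: "'a set set"
  assumes "u \<notin> X"
  defines "M \<equiv> insert u (\<Union>(touching X F u))"
  shows "components (insert u X) F = insert M (components X F - touching X F u)"
proof (rule components_eq_insert_Diff)
  show "M \<in> components (insert u X) F"
    using component_insert_vertex_self[OF assms(1)] unfolding components_def M_def by blast
  show "x \<in> M \<longleftrightarrow> component X F x \<in> touching X F u" if x: "x \<in> X" for x
  proof
    assume "x \<in> M"
    then obtain C where "C \<in> touching X F u" "x \<in> C"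
      using assms(1) x unfolding M_def by auto
    then show "component X F x \<in> touching X F u"
      using component_of_mem_components touching_subset_components by (metis subsetD)
  next
    assume "component X F x \<in> touching X F u"
    then show "x \<in> M"
      unfolding M_def using component_refl[of x X F] by blast
  qed
qed (use component_insert_vertex[OF assms(1)] in \<open>auto simp: M_def\<close>)

lemma num_components_insert_vertex:
  fixes F :: "'a set set"
  assumes "finite X" "u \<notin> X"
  shows "num_components (insert u X) F + card (touching X F u) = num_components X F + 1"
proof -
  have "insert u (\<Union>(touching X F u)) \<notin> components X F - touching X F u"
    using components_subset assms(2) by blast
  then show ?thesis
    unfolding components_insert_vertex[OF assms(2)]
  proof (rule card_insert_Diff_subset[rotated 2])
    show "finite (components X F)"
      using assms(1) by (rule finite_components)
  qed (rule touching_subset_components)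
qed

lemma card_touching_insert_vertex:
  fixes F :: "'a set set"
  assumes "finite X" "u \<notin> X" "v \<notin> insert u X"
  defines "M \<equiv> insert u (\<Union>(touching X F u))"
  shows "card (touching (insert u X) F v) =
    card (touching X F v - touching X F u) + (if \<exists>y\<in>M. {v, y} \<in> F then 1 else 0)"
proof -
  have "touching (insert u X) F v =
      (touching X F v - touching X F u) \<union> (if \<exists>y\<in>M. {v, y} \<in> F then {M} else {})"
    unfolding touching_def components_insert_vertex[OF assms(2)] M_def by auto
  moreover have "M \<notin> touching X F v"
    using touching_subset_components[of X F v] components_subset assms(2) unfolding M_def by blast
  ultimately show ?thesis
    using finite_touching[OF assms(1)] by auto
qed

lemma num_components_insert_two_vertices:
  fixes F :: "'a set set"
  assumes "finite S" "u \<notin> S" "v \<notin> S" "u \<noteq> v"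
    and at_most_one: "card (touching S F u \<inter> touching S F v) \<le> 1"
    and edge_uv: "{u, v} \<in> F \<Longrightarrow> touching S F u \<inter> touching S F v \<noteq> {}"
  shows "num_components (insert u S) F + num_components (insert v S) F
    = num_components S F + num_components (insert u (insert v S)) F"
proof -
  let ?Ku = "touching S F u" and ?Kv = "touching S F v"
  let ?joined = "{u, v} \<in> F \<or> ?Ku \<inter> ?Kv \<noteq> {}"
  have u: "num_components (insert u S) F + card ?Ku = num_components S F + 1"
    using assms(1,2) by (rule num_components_insert_vertex)
  have v: "num_components (insert v S) F + card ?Kv = num_components S F + 1"
    using assms(1,3) by (rule num_components_insert_vertex)
  have uv: "num_components (insert u (insert v S)) F + card (touching (insert v S) F u)
      = num_components (insert v S) F + 1"
    using assms by (intro num_components_insert_vertex) auto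
  (* Once v is added, the components of ?Kv form one component together with v. *)
  have "(\<exists>y\<in>insert v (\<Union>?Kv). {u, y} \<in> F) \<longleftrightarrow> ?joined"
    unfolding touching_def using component_of_mem_components by blast
  then have "card (touching (insert v S) F u) = card (?Ku - ?Kv) + (if ?joined then 1 else 0)"
    using card_touching_insert_vertex[of S v u F] assms(1-4) by simp
  moreover have "card ?Ku = card (?Ku \<inter> ?Kv) + card (?Ku - ?Kv)"
    using finite_touching[OF assms(1)] by (rule card_Int_Diff)
  moreover have "card (?Ku \<inter> ?Kv) = (if ?joined then 1 else 0)"
    using at_most_one edge_uv finite_touching[OF assms(1), of F u]
    by (auto simp: le_Suc_eq card_gt_0_iff)
  ultimately show ?thesis
    using u v uv by simp
qed

section \<open>Spanning trees and Kruskal's algorithm\<close>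

lemma insert_in_all_edges_iff: "{a, b} \<in> all_edges X \<longleftrightarrow> a \<in> X \<and> b \<in> X \<and> a \<noteq> b"
  unfolding all_edges_def by (auto simp: doubleton_eq_iff)

lemma all_edges_mono: "X \<subseteq> Y \<Longrightarrow> all_edges X \<subseteq> all_edges Y"
  unfolding all_edges_def by blast

lemma finite_all_edges: "finite X \<Longrightarrow> finite (all_edges X)"
proof -
  assume "finite X"
  moreover have "all_edges X \<subseteq> (\<lambda>(x, y). {x, y}) ` (X \<times> X)"
    unfolding all_edges_def by auto
  ultimately show ?thesis
    using finite_subset by blast
qed

lemma all_edges_cases:
  assumes "e \<in> all_edges X"
  obtains a b where "e = {a, b}" "a \<in> X" "b \<in> X" "a \<noteq> b"
  using assms unfolding all_edges_def by blast

lemma num_components_no_edges: "finite X \<Longrightarrow> num_components X {} = card X"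
proof -
  assume "finite X"
  have "component X {} x = {x}" for x
    by (simp add: component_def edge_rel_def)
  then have "components X {} = (\<lambda>x. {x}) ` X"
    by (simp add: components_def)
  then show ?thesis
    by (simp add: card_image)
qed

lemma components_eq_singleton_if_connected:
  assumes "X \<noteq> {}" "\<And>x y. x \<in> X \<Longrightarrow> y \<in> X \<Longrightarrow> y \<in> component X F x"
  shows "components X F = {X}"
proof -
  have "component X F x = X" if "x \<in> X" for x
    using component_subset[OF that] assms(2)[OF that] by blast
  then show ?thesis
    using assms(1) unfolding components_def by auto
qed

lemma components_all_edges: "X \<noteq> {} \<Longrightarrow> components X (all_edges X) = {X}"
proof (rule components_eq_singleton_if_connected)
  fix x y assume "x \<in> X" "y \<in> X"
  then show "y \<in> component X (all_edges X) x"
    by (cases "x = y") (auto intro: component_edge simp: insert_in_all_edges_iff)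
qed

lemma spanning_tree_components:
  assumes "spanning_tree X T" "T \<subseteq> F" "X \<noteq> {}"
  shows "components X F = {X}"
proof (rule components_eq_singleton_if_connected[OF assms(3)])
  fix x y assume "x \<in> X" "y \<in> X"
  then have "(x, y) \<in> {(a, b). {a, b} \<in> T}\<^sup>*"
    using assms(1) by (simp add: spanning_tree_def)
  moreover have "T \<subseteq> all_edges X"
    using assms(1) by (simp add: spanning_tree_def)
  then have "{(a, b). {a, b} \<in> T} \<subseteq> edge_rel X F"
    using assms(2) by (auto simp: edge_rel_def insert_in_all_edges_iff)
  ultimately show "y \<in> component X F x"
    unfolding component_def using rtrancl_mono by blast
qed

lemma spanning_treeI:
  assumes "F \<subseteq> all_edges X" "card F + 1 = card X" "components X F = {X}"
  shows "spanning_tree X F"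
  unfolding spanning_tree_def
proof (intro conjI ballI)
  fix x y assume "x \<in> X" "y \<in> X"
  then have "y \<in> component X F x"
    using assms(3) unfolding components_def by blast
  moreover have "edge_rel X F \<subseteq> {(a, b). {a, b} \<in> F}"
    by (auto simp: edge_rel_def)
  ultimately show "(x, y) \<in> {(a, b). {a, b} \<in> F}\<^sup>*"
    unfolding component_def using rtrancl_mono by blast
qed (use assms in auto)

lemma num_components_union_le:
  assumes "finite X" "finite A" "A \<subseteq> all_edges X"
  shows "num_components X F \<le> num_components X (F \<union> A) + card A"
  using assms(2,3)
proof (induction A rule: finite_induct)
  case (insert e A)
  then obtain a b where ab: "e = {a, b}" "a \<in> X" "b \<in> X"
    by (auto elim: all_edges_cases)
  have "num_components X (insert {a, b} (F \<union> A)) + card {component X (F \<union> A) a, component X (F \<union> A) b}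
      = num_components X (F \<union> A) + 1"
    using assms(1) ab(2,3) by (rule num_components_insert_edge)
  moreover have "card {component X (F \<union> A) a, component X (F \<union> A) b} \<le> 2"
    by (simp add: card_insert_le_m1)
  ultimately show ?case
    using insert ab(1) by simp
qed simp

lemma spanning_tree_heavy_edges:
  assumes "finite X" "X \<noteq> {}" "spanning_tree X T"
  shows "num_components X (thr_edges w X t) \<le> card {e \<in> T. t < w e} + 1"
proof -
  let ?A = "{e \<in> T. t < w e}"
  have T: "T \<subseteq> all_edges X"
    using assms(3) by (simp add: spanning_tree_def)
  then have "T \<subseteq> thr_edges w X t \<union> ?A"
    by (auto simp: thr_edges_def)
  then have "num_components X (thr_edges w X t \<union> ?A) = 1"
    using spanning_tree_components[OF assms(3) _ assms(2)] by simp
  moreover have "num_components X (thr_edges w X t) \<le> num_components X (thr_edges w X t \<union> ?A) + card ?A"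
    using T finite_subset[OF T finite_all_edges[OF assms(1)]]
    by (intro num_components_union_le assms(1)) auto
  ultimately show ?thesis
    by simp
qed

lemma components_eq_if_edges_inside:
  assumes "F \<subseteq> H" "\<And>a b. a \<in> X \<Longrightarrow> b \<in> X \<Longrightarrow> {a, b} \<in> H \<Longrightarrow> b \<in> component X F a"
  shows "components X F = components X H"
proof -
  have "component X H x = component X F x" for x
  proof (rule component_eqI)
    show "component X F x \<subseteq> component X H x"
      using assms(1) by (rule component_mono[OF order_refl])
    fix y z assume y: "y \<in> component X F x" and "(y, z) \<in> edge_rel X H"
    then have "z \<in> component X F y"
      using assms(2) by (auto simp: edge_rel_def)
    then show "z \<in> component X F x"
      using component_eq[OF y] by simp
  qed simp
  then show ?thesis
    by (simp add: components_def)
qed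

lemma extend_forest:
  assumes "finite X" "H \<subseteq> all_edges X" "F \<subseteq> H" "card F + num_components X F = card X"
  shows "\<exists>F'. F \<subseteq> F' \<and> F' \<subseteq> H \<and> card F' + num_components X F' = card X
    \<and> components X F' = components X H"
  using assms(3,4)
proof (induction "num_components X F" arbitrary: F rule: less_induct)
  case less
  show ?case
  proof (cases "components X F = components X H")
    case False
    then obtain a b where ab: "a \<in> X" "b \<in> X" "{a, b} \<in> H" "b \<notin> component X F a"
      using components_eq_if_edges_inside[OF less.prems(1)] by blast
    let ?F = "insert {a, b} F"
    have "component X F b \<noteq> component X F a"
      using ab(4) component_refl[of b X F] by blast
    then have merge: "num_components X ?F + 1 = num_components X F"
      using num_components_insert_edge[OF assms(1) ab(1,2), of F] by simp
    have "{a, b} \<notin> F"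
      using ab component_edge by metis
    moreover have "finite F"
      using less.prems(1) assms(2) finite_all_edges[OF assms(1)] by (meson finite_subset)
    ultimately have "card ?F + num_components X ?F = card X"
      using merge less.prems(2) by simp
    moreover have "num_components X ?F < num_components X F"
      using merge by simp
    moreover have "?F \<subseteq> H"
      using less.prems(1) ab(3) by simp
    ultimately have "\<exists>F'. ?F \<subseteq> F' \<and> F' \<subseteq> H \<and> card F' + num_components X F' = card X
        \<and> components X F' = components X H"
      using less.hyps[of ?F] by simp
    then obtain F' where "?F \<subseteq> F'" "F' \<subseteq> H"
        "card F' + num_components X F' = card X" "components X F' = components X H"
      by blast
    then show ?thesis
      by (intro exI[of _ F']) auto
  qed (use less.prems in \<open>intro exI[of _ F]\<close>, simp)
qed

lemma greedy_forest:
  fixes w :: "'a set \<Rightarrow> real"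
  assumes "finite X" "finite \<Theta>"
  shows "\<exists>F. F \<subseteq> all_edges X \<and> card F + num_components X F = card X
    \<and> (\<forall>e\<in>F. \<exists>t\<in>\<Theta>. w e \<le> t)
    \<and> (\<forall>t\<in>\<Theta>. card X \<le> card {e \<in> F. w e \<le> t} + num_components X (thr_edges w X t))"
  using assms(2)
proof (induction \<Theta> rule: finite_linorder_max_induct)
  case empty
  show ?case
    using num_components_no_edges[OF assms(1)] by (intro exI[of _ "{}"]) simp
next
  case (insert b \<Theta>)
  then obtain F0 where F0: "F0 \<subseteq> all_edges X" "card F0 + num_components X F0 = card X"
      "\<forall>e\<in>F0. \<exists>t\<in>\<Theta>. w e \<le> t"
      "\<forall>t\<in>\<Theta>. card X \<le> card {e \<in> F0. w e \<le> t} + num_components X (thr_edges w X t)"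
    by blast
  have thr_all: "thr_edges w X b \<subseteq> all_edges X"
    by (simp add: thr_edges_def)
  have "F0 \<subseteq> thr_edges w X b"
    using F0(1,3) insert.hyps(2) by (fastforce simp: thr_edges_def)
  then obtain F where F: "F0 \<subseteq> F" "F \<subseteq> thr_edges w X b"
      "card F + num_components X F = card X" "components X F = components X (thr_edges w X b)"
    using extend_forest[OF assms(1) thr_all _ F0(2)] by blast
  have "finite F"
    using F(2) thr_all finite_all_edges[OF assms(1)] by (meson finite_subset)
  then have "card {e \<in> F0. w e \<le> t} \<le> card {e \<in> F. w e \<le> t}" for t
    using F(1) by (intro card_mono) auto
  then have "\<forall>t\<in>\<Theta>. card X \<le> card {e \<in> F. w e \<le> t} + num_components X (thr_edges w X t)"
    using F0(4) by (meson add_right_mono order_trans)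
  moreover have "{e \<in> F. w e \<le> b} = F"
    using F(2) by (auto simp: thr_edges_def)
  then have "card X \<le> card {e \<in> F. w e \<le> b} + num_components X (thr_edges w X b)"
    using F(3,4) by simp
  moreover have "F \<subseteq> all_edges X" "\<forall>e\<in>F. \<exists>t\<in>insert b \<Theta>. w e \<le> t"
    using F(2) by (auto simp: thr_edges_def)
  ultimately show ?case
    using F(3) by (intro exI[of _ F]) simp
qed

lemma kruskal_spanning_tree:
  fixes w :: "'a set \<Rightarrow> real"
  assumes "finite X" "X \<noteq> {}" "finite \<Theta>"
  shows "\<exists>T. spanning_tree X T
    \<and> (\<forall>t\<in>\<Theta>. card {e \<in> T. t < w e} + 1 \<le> num_components X (thr_edges w X t))"
proof -
  obtain F where F: "F \<subseteq> all_edges X" "card F + num_components X F = card X"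
      "\<forall>t\<in>\<Theta>. card X \<le> card {e \<in> F. w e \<le> t} + num_components X (thr_edges w X t)"
    using greedy_forest[OF assms(1,3), of w] by blast
  then obtain T where T: "F \<subseteq> T" "T \<subseteq> all_edges X" "card T + num_components X T = card X"
      "components X T = {X}"
    using extend_forest[OF assms(1) order_refl F(1,2)] components_all_edges[OF assms(2)] by auto
  have "spanning_tree X T"
    using T(2-4) by (intro spanning_treeI) auto
  moreover have "card {e \<in> T. t < w e} + 1 \<le> num_components X (thr_edges w X t)"
    if "t \<in> \<Theta>" for t
  proof -
    have finite_T: "finite T"
      using T(2) finite_subset finite_all_edges[OF assms(1)] by blast
    have "card {e \<in> F. w e \<le> t} \<le> card {e \<in> T. w e \<le> t}"
      using T(1) finite_T by (intro card_mono) auto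
    moreover have "card {e \<in> T. t < w e} + card {e \<in> T. w e \<le> t} = card T"
      using card_Int_Diff[OF finite_T, of "{e. t < w e}"] by (simp add: Int_def set_diff_eq not_less)
    ultimately show ?thesis
      using F(3) that T(3,4) by fastforce
  qed
  ultimately show ?thesis
    by blast
qed

section \<open>The layer-cake formula for minimum spanning trees\<close>

(* For W = {w_1 < ... < w_k}: gap_to_next W w_i = w_(i+1) - w_i, and gap_to_next W w_k = 0. *)
definition gap_to_next :: "real set \<Rightarrow> real \<Rightarrow> real" where
  "gap_to_next W t = (if \<exists>t'\<in>W. t < t' then Min {t' \<in> W. t < t'} - t else 0)"

lemma gap_to_next_nonneg:
  assumes "finite W"
  shows "gap_to_next W t \<ge> 0"
proof (cases "\<exists>t'\<in>W. t < t'")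
  case True
  then have "Min {t' \<in> W. t < t'} \<in> {t' \<in> W. t < t'}"
    using assms by (intro Min_in) auto
  then show ?thesis
    by (simp add: gap_to_next_def)
qed (simp add: gap_to_next_def)

lemma eq_Min_plus_gaps_below:
  assumes "finite W" "s \<in> W"
  shows "s = Min W + (\<Sum>t\<in>{t \<in> W. t < s}. gap_to_next W t)"
  using assms(2)
proof (induction "card {t \<in> W. t < s}" arbitrary: s rule: less_induct)
  case less
  let ?B = "{t \<in> W. t < s}"
  show ?case
  proof (cases "?B = {}")
    case True
    then have "Min W = s"
      using assms(1) less.prems by (intro Min_eqI) auto
    with True show ?thesis
      by (metis add.right_neutral sum.empty)
  next
    case False
    let ?p = "Max ?B"
    have finite_B: "finite ?B"
      using assms(1) by simp
    have p: "?p \<in> W" "?p < s"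
      using Max_in[OF _ False] assms(1) by auto
    have B: "?B = insert ?p {t \<in> W. t < ?p}"
      using Max_ge[of ?B] assms(1) p by fastforce
    have "card {t \<in> W. t < ?p} < card ?B"
      using assms(1) p by (intro psubset_card_mono) auto
    then have IH: "?p = Min W + (\<Sum>t\<in>{t \<in> W. t < ?p}. gap_to_next W t)"
      using less.hyps p(1) by blast
    have "Min {t' \<in> W. ?p < t'} = s"
    proof (rule Min_eqI)
      show "s \<le> y" if "y \<in> {t' \<in> W. ?p < t'}" for y
        using that Max_ge[OF finite_B, of y] by (cases "y < s") auto
    qed (use assms(1) less.prems p in auto)
    then have "gap_to_next W ?p = s - ?p"
      unfolding gap_to_next_def using less.prems p(2) by auto
    then show ?thesis
      using IH assms(1) by (subst B) simp
  qed
qed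

lemma sum_eq_layer_cake:
  fixes w :: "'b \<Rightarrow> real"
  assumes "finite W" "finite T" "w ` T \<subseteq> W"
  shows "sum w T = Min W * card T + (\<Sum>t\<in>W. gap_to_next W t * card {e \<in> T. t < w e})"
proof -
  have "sum w T = (\<Sum>e\<in>T. Min W + (\<Sum>t\<in>W. if t < w e then gap_to_next W t else 0))"
    using eq_Min_plus_gaps_below[OF assms(1)] assms(3)
    by (intro sum.cong) (auto simp: sum.inter_filter[OF assms(1)])
  also have "\<dots> = Min W * card T + (\<Sum>t\<in>W. \<Sum>e\<in>T. if t < w e then gap_to_next W t else 0)"
    by (simp add: sum.distrib sum.swap[of _ T W])
  also have "\<dots> = Min W * card T + (\<Sum>t\<in>W. gap_to_next W t * card {e \<in> T. t < w e})"
    by (simp add: sum.If_cases[OF assms(2)] Int_def mult.commute)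
  finally show ?thesis .
qed

lemma spanning_tree_weight:
  fixes w :: "'a set \<Rightarrow> real"
  assumes "finite X" "X \<noteq> {}" "finite W" "w ` all_edges X \<subseteq> W" "spanning_tree X T"
  shows "sum w T = Min W * (real (card X) - 1) + (\<Sum>t\<in>W. gap_to_next W t * card {e \<in> T. t < w e})"
proof -
  have T: "T \<subseteq> all_edges X" "card T = card X - 1"
    using assms(5) by (auto simp: spanning_tree_def)
  moreover have "card X \<ge> 1"
    using assms(1,2) by (simp add: Suc_le_eq card_gt_0_iff)
  ultimately have "real (card T) = real (card X) - 1"
    by simp
  moreover have "w ` T \<subseteq> W"
    using T(1) assms(4) by blast
  ultimately show ?thesis
    using sum_eq_layer_cake[OF assms(3) finite_subset[OF T(1) finite_all_edges[OF assms(1)]]]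
    by simp
qed

lemma mst_eq_layer_cake:
  fixes w :: "'a set \<Rightarrow> real"
  assumes "finite X" "X \<noteq> {}" "finite W" "w ` all_edges X \<subseteq> W"
  shows "mst w X = Min W * (real (card X) - 1)
    + (\<Sum>t\<in>W. gap_to_next W t * (real (num_components X (thr_edges w X t)) - 1))"
    (is "_ = ?bound")
proof -
  note tree_weight = spanning_tree_weight[OF assms]
  have lower: "?bound \<le> sum w T" if "spanning_tree X T" for T
  proof -
    have "gap_to_next W t * (real (num_components X (thr_edges w X t)) - 1)
        \<le> gap_to_next W t * card {e \<in> T. t < w e}" for t
      using spanning_tree_heavy_edges[OF assms(1,2) that, of w t] gap_to_next_nonneg[OF assms(3), of t]
      by (intro mult_left_mono) auto
    then show ?thesis
      unfolding tree_weight[OF that] by (intro add_left_mono sum_mono)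
  qed
  obtain K where K: "spanning_tree X K"
      "\<forall>t\<in>W. card {e \<in> K. t < w e} + 1 \<le> num_components X (thr_edges w X t)"
    using kruskal_spanning_tree[OF assms(1-3)] by blast
  have "card {e \<in> K. t < w e} + 1 = num_components X (thr_edges w X t)" if "t \<in> W" for t
    using K(2) that spanning_tree_heavy_edges[OF assms(1,2) K(1)] by (meson le_antisym)
  then have "sum w K = ?bound"
    unfolding tree_weight[OF K(1)] by (intro arg_cong2[where f = "(+)"] sum.cong) force+
  moreover have "{sum w T | T. spanning_tree X T} \<subseteq> sum w ` Pow (all_edges X)"
    by (auto simp: spanning_tree_def)
  then have "finite {sum w T | T. spanning_tree X T}"
    using finite_all_edges[OF assms(1)] finite_subset by blast
  ultimately have "Min {sum w T | T. spanning_tree X T} = ?bound"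
    using K(1) lower by (intro Min_eqI) (auto intro!: exI[of _ K])
  then show ?thesis
    by (simp add: mst_def)
qed

section \<open>Paths and induced paths\<close>

fun path_edges :: "'a list \<Rightarrow> 'a set set" where
  "path_edges (a # b # xs) = insert {a, b} (path_edges (b # xs))"
| "path_edges _ = {}"

lemma path_edges_Cons: "p \<noteq> [] \<Longrightarrow> path_edges (x # p) = insert {x, hd p} (path_edges p)"
  by (cases p) auto

lemma path_edges_append: "path_edges (xs @ y # ys) = path_edges (xs @ [y]) \<union> path_edges (y # ys)"
  by (induction xs rule: path_edges.induct) auto

lemma path_edges_snoc: "p \<noteq> [] \<Longrightarrow> path_edges (p @ [y]) = insert {last p, y} (path_edges p)"
  by (induction p rule: path_edges.induct) auto

lemma path_edges_rev: "path_edges (rev xs) = path_edges xs"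
proof (induction xs)
  case (Cons a xs)
  show ?case
  proof (cases xs)
    case (Cons b ys)
    then have "path_edges (rev (a # xs)) = insert {b, a} (path_edges (rev xs))"
      using path_edges_snoc[of "rev xs" a] by (simp add: last_rev)
    then show ?thesis
      using Cons.IH Cons by (simp add: insert_commute)
  qed simp
qed simp

lemma path_edge_subset: "e \<in> path_edges xs \<Longrightarrow> e \<subseteq> set xs"
  by (induction xs rule: path_edges.induct) auto

lemma path_edges_conv_nth: "path_edges xs = (\<lambda>i. {xs ! i, xs ! Suc i}) ` {..<length xs - 1}"
  by (induction xs rule: path_edges.induct) (auto simp: lessThan_Suc_eq_insert_0 image_image)

lemma cycle_edges_eq_path_edges:
  assumes "cs \<noteq> []"
  shows "{cyc_edge cs j | j. j < length cs} = path_edges (cs @ [hd cs])"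
proof -
  have "cyc_edge cs j = {(cs @ [hd cs]) ! j, (cs @ [hd cs]) ! Suc j}" if "j < length cs" for j
  proof (cases "Suc j < length cs")
    case False
    with that have "Suc j = length cs"
      by simp
    with assms show ?thesis
      by (simp add: cyc_edge_def nth_append hd_conv_nth)
  qed (use that in \<open>simp add: cyc_edge_def nth_append\<close>)
  then show ?thesis
    unfolding path_edges_conv_nth by auto
qed

lemma component_walk:
  assumes "y \<in> component X F x"
  shows "\<exists>p. p \<noteq> [] \<and> hd p = x \<and> last p = y \<and> set p \<subseteq> component X F x \<and> path_edges p \<subseteq> F"
proof -
  have "(x, y) \<in> (edge_rel X F)\<^sup>*"
    using assms by (simp add: component_def)
  then show ?thesis
  proof (induction rule: rtrancl_induct)
    case base
    show ?case
      by (intro exI[of _ "[x]"]) simp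
  next
    case (step y z)
    then obtain p where p: "p \<noteq> []" "hd p = x" "last p = y" "set p \<subseteq> component X F x"
        "path_edges p \<subseteq> F"
      by blast
    have "z \<in> component X F x"
      unfolding component_def using step(1,2) by (simp add: rtrancl.rtrancl_into_rtrancl)
    moreover have "{y, z} \<in> F"
      using step(2) by (simp add: edge_rel_def)
    ultimately show ?case
      using p by (intro exI[of _ "p @ [z]"]) (simp add: path_edges_snoc)
  qed
qed

definition induced_path :: "'a set set \<Rightarrow> 'a list \<Rightarrow> bool" where
  "induced_path G p \<longleftrightarrow> distinct p \<and> path_edges p \<subseteq> G \<and>
     (\<forall>x\<in>set p. \<forall>y\<in>set p. x \<noteq> y \<longrightarrow> {x, y} \<in> G \<longrightarrow> {x, y} \<in> path_edges p)"

lemma path_edges_shortcut: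
  "path_edges (pre @ a # b # post) \<subseteq> insert {a, b} (path_edges (pre @ a # mid @ b # post))"
  using path_edges_append[of pre a "mid @ b # post"] path_edges_append[of pre a "b # post"]
    path_edges_append[of "a # mid" b post]
  by auto

lemma path_edges_remove_loop:
  "path_edges (pre @ a # post) \<subseteq> path_edges (pre @ a # mid @ a # post)"
  using path_edges_append[of pre a "mid @ a # post"] path_edges_append[of pre a post]
    path_edges_append[of "a # mid" a post]
  by auto

lemma induced_path_chordless:
  "induced_path G p \<Longrightarrow> x \<in> set p \<Longrightarrow> y \<in> set p \<Longrightarrow> x \<noteq> y \<Longrightarrow> {x, y} \<in> G
    \<Longrightarrow> {x, y} \<in> path_edges p"
  by (simp add: induced_path_def)

lemma chord_in_path_edges_if_no_shortcut:
  assumes no_shortcut: "\<And>pre a mid b post. q = pre @ a # mid @ b # post \<Longrightarrow> {a, b} \<in> G \<Longrightarrow> mid = []"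
    and x: "x \<in> set q" and y: "y \<in> set q" and "x \<noteq> y" and xy: "{x, y} \<in> G"
  shows "{x, y} \<in> path_edges q"
proof -
  have adjacent: "{a, b} \<in> path_edges q"
    if q_split: "q = pre @ a # post" and b: "b \<in> set post" and ab: "{a, b} \<in> G" for pre a b post
  proof -
    obtain mid post' where "post = mid @ b # post'"
      using split_list[OF b] by blast
    with q_split ab have "q = pre @ a # b # post'"
      using no_shortcut by simp
    then show ?thesis
      using path_edges_append[of pre a "b # post'"] by simp
  qed
  obtain pre post where q_split: "q = pre @ x # post"
    using split_list[OF x] by blast
  show ?thesis
  proof (cases "y \<in> set post")
    case True
    then show ?thesis
      using adjacent q_split xy by blast
  next
    case False
    with y \<open>x \<noteq> y\<close> q_split obtain pre' mid where "pre = pre' @ y # mid"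
      using split_list by fastforce
    with q_split have "q = pre' @ y # (mid @ [x] @ post)"
      by simp
    then show ?thesis
      using adjacent[where pre = pre' and a = y and b = x and post = "mid @ [x] @ post"] xy
      by (simp add: insert_commute)
  qed
qed

lemma induced_path_exists:
  assumes "p \<noteq> []" "path_edges p \<subseteq> G"
  shows "\<exists>q. induced_path G q \<and> q \<noteq> [] \<and> hd q = hd p \<and> last q = last p \<and> set q \<subseteq> set p"
proof -
  define walk where
    "walk q \<longleftrightarrow> q \<noteq> [] \<and> hd q = hd p \<and> last q = last p \<and> set q \<subseteq> set p \<and> path_edges q \<subseteq> G"
    for q
  obtain q where q: "walk q" and shortest: "\<And>q'. walk q' \<Longrightarrow> length q \<le> length q'"
    using ex_has_least_nat[of walk p length] assms unfolding walk_def by blast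
  have no_shortcut: "mid = []" if "q = pre @ a # mid @ b # post" "{a, b} \<in> G" for pre a mid b post
  proof -
    have "walk (pre @ a # b # post)"
      using q that path_edges_shortcut[of pre a b post mid] unfolding walk_def
      by (cases pre; cases post) auto
    then show ?thesis
      using shortest that by fastforce
  qed
  have "distinct q"
  proof (rule ccontr)
    assume "\<not> distinct q"
    then obtain pre a mid post where q_loop: "q = pre @ a # mid @ a # post"
      using not_distinct_decomp by fastforce
    then have "walk (pre @ a # post)"
      using q path_edges_remove_loop[of pre a post mid] unfolding walk_def
      by (cases pre; cases post) auto
    then show False
      using shortest q_loop by fastforce
  qed
  moreover have "\<forall>x\<in>set q. \<forall>y\<in>set q. x \<noteq> y \<longrightarrow> {x, y} \<in> G \<longrightarrow> {x, y} \<in> path_edges q"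
  proof (intro ballI impI)
    fix x y assume "x \<in> set q" "y \<in> set q" "x \<noteq> y" "{x, y} \<in> G"
    with no_shortcut show "{x, y} \<in> path_edges q"
      by (rule chord_in_path_edges_if_no_shortcut)
  qed
  ultimately show ?thesis
    using q unfolding walk_def induced_path_def by (intro exI[of _ q]) simp
qed

lemma induced_path_through_component:
  assumes "C \<in> touching S F u \<inter> touching S F v" "u \<notin> S" "v \<notin> S" "u \<noteq> v"
  obtains m where "set m \<subseteq> C" "induced_path (F - {{u, v}}) (v # m @ [u])"
proof -
  let ?G = "F - {{u, v}}"
  obtain a b where ab: "C \<in> components S F" "a \<in> C" "{u, a} \<in> F" "b \<in> C" "{v, b} \<in> F"
    using assms(1) by (auto simp: touching_def)
  have C: "C \<subseteq> S" "component S F b = C"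
    using ab(1,4) by (auto dest: components_subset component_of_mem_components)
  then obtain p where p: "p \<noteq> []" "hd p = b" "last p = a" "set p \<subseteq> C" "path_edges p \<subseteq> F"
    using component_walk[of a S F b] ab(2) by auto
  have "e \<noteq> {u, v}" if "e \<in> path_edges p" for e
    using path_edge_subset[OF that] p(4) C(1) assms(2) by blast
  moreover have "{v, b} \<noteq> {u, v}" "{a, u} \<noteq> {u, v}"
    using assms(2,3) ab(2,4) C(1) by (auto simp: doubleton_eq_iff)
  ultimately have "path_edges (v # p @ [u]) \<subseteq> ?G"
    using p ab(3,5) by (auto simp: path_edges_Cons path_edges_snoc insert_commute)
  then obtain q where q: "induced_path ?G q" "q \<noteq> []" "hd q = v" "last q = u"
      "set q \<subseteq> insert v (insert u C)"
    using induced_path_exists[of "v # p @ [u]" ?G] p(4) by auto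
  then obtain ys where ys: "q = ys @ [u]"
    by (cases q rule: rev_cases) auto
  with q(3) assms(4) obtain m where "q = v # m @ [u]"
    by (cases ys) auto
  moreover have "set m \<subseteq> C"
    using q calculation by (auto simp: induced_path_def)
  ultimately show ?thesis
    using that q(1) by blast
qed

section \<open>Violated cycles through two components\<close>

locale two_paths_through_components =
  fixes S :: "'a set" and F :: "'a set set" and u v :: 'a
    and C1 C2 :: "'a set" and m1 m2 :: "'a list"
  assumes components: "C1 \<in> components S F" "C2 \<in> components S F" "C1 \<noteq> C2"
    and outside: "u \<notin> S" "v \<notin> S" "u \<noteq> v"
    and path1: "induced_path (F - {{u, v}}) (v # m1 @ [u])" "set m1 \<subseteq> C1"
    and path2: "induced_path (F - {{u, v}}) (v # m2 @ [u])" "set m2 \<subseteq> C2"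
begin

abbreviation cyc :: "'a list" where
  "cyc \<equiv> v # m1 @ u # rev m2"

lemma components_subset_S: "C1 \<subseteq> S" "C2 \<subseteq> S"
  using components components_subset by auto

lemma no_edge_between: "x \<in> C1 \<Longrightarrow> y \<in> C2 \<Longrightarrow> {x, y} \<notin> F"
  using components by (rule components_no_edge)

lemma C1_C2_disjoint: "C1 \<inter> C2 = {}"
  using components by (rule components_disjoint)

lemma interiors_nonempty: "m1 \<noteq> []" "m2 \<noteq> []"
  using path1(1) path2(1) by (auto simp: induced_path_def insert_commute)

lemma distinct_cyc: "distinct cyc"
  using path1 path2 C1_C2_disjoint outside(3) by (auto simp: induced_path_def)

lemma cycle_edges_cyc:
  "{cyc_edge cyc j | j. j < length cyc} = path_edges (v # m1 @ [u]) \<union> path_edges (v # m2 @ [u])"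
proof -
  have "cyc @ [hd cyc] = (v # m1) @ u # rev (v # m2)"
    by simp
  then have "path_edges (cyc @ [hd cyc]) = path_edges (v # m1 @ [u]) \<union> path_edges (rev (v # m2 @ [u]))"
    using path_edges_append[of "v # m1" u "rev (v # m2)"] by simp
  then show ?thesis
    using cycle_edges_eq_path_edges[of cyc] path_edges_rev[of "v # m2 @ [u]"] by simp
qed

lemma is_cycle_cyc:
  assumes "S \<subseteq> V" "u \<in> V" "v \<in> V"
  shows "is_cycle V F cyc"
  unfolding is_cycle_def
proof (intro conjI allI impI)
  show "3 \<le> length cyc"
    using interiors_nonempty by (simp add: Suc_le_eq length_greater_0_conv)
  show "set cyc \<subseteq> V"
    using assms path1(2) path2(2) components_subset_S by auto
  fix j assume "j < length cyc"
  then show "cyc_edge cyc j \<in> F"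
    using cycle_edges_cyc path1(1) path2(1) by (auto simp: induced_path_def)
qed (rule distinct_cyc)

lemma chord_eq_uv:
  assumes "x \<in> set cyc" "y \<in> set cyc" "x \<noteq> y" "{x, y} \<in> F"
    and "{x, y} \<notin> path_edges (v # m1 @ [u]) \<union> path_edges (v # m2 @ [u])"
  shows "{x, y} = {u, v}"
proof (rule ccontr)
  assume "{x, y} \<noteq> {u, v}"
  with assms(4) have G: "{x, y} \<in> F - {{u, v}}"
    by simp
  have "\<not> (x \<in> set (v # m1 @ [u]) \<and> y \<in> set (v # m1 @ [u]))"
    using induced_path_chordless[OF path1(1) _ _ assms(3) G] assms(5) by blast
  moreover have "\<not> (x \<in> set (v # m2 @ [u]) \<and> y \<in> set (v # m2 @ [u]))"
    using induced_path_chordless[OF path2(1) _ _ assms(3) G] assms(5) by blast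
  ultimately have "x \<in> set m1 \<and> y \<in> set m2 \<or> x \<in> set m2 \<and> y \<in> set m1"
    using assms(1,2) by auto
  then show False
  proof (elim disjE conjE)
    assume "x \<in> set m1" "y \<in> set m2"
    then show False
      using no_edge_between[of x y] path1(2) path2(2) assms(4) by blast
  next
    assume "x \<in> set m2" "y \<in> set m1"
    then have "{y, x} \<notin> F"
      using no_edge_between[of y x] path1(2) path2(2) by blast
    then show False
      using assms(4) by (simp add: insert_commute)
  qed
qed

lemma well_covered_cyc:
  fixes w :: "'a set \<Rightarrow> real"
  assumes triangle: "{u, v} \<in> F \<Longrightarrow> \<exists>s. m1 = [s] \<and> w {v, s} \<le> w {u, v} \<and> w {s, u} \<le> w {u, v}"
  shows "well_covered w F cyc"
  unfolding well_covered_def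
proof (intro allI impI)
  fix a b assume "is_chord F cyc a b"
  then have ab: "a < b" "b < length cyc" "{cyc ! a, cyc ! b} \<in> F"
      "{cyc ! a, cyc ! b} \<notin> path_edges (v # m1 @ [u]) \<union> path_edges (v # m2 @ [u])"
    unfolding is_chord_def cycle_edges_cyc by auto
  then have "cyc ! a \<noteq> cyc ! b"
    using nth_eq_iff_index_eq[OF distinct_cyc, of a b] by simp
  moreover have "a < length cyc"
    using ab(1,2) by simp
  ultimately have chord: "{cyc ! a, cyc ! b} = {u, v}"
    using chord_eq_uv[OF nth_mem nth_mem[OF ab(2)] _ ab(3,4)] by blast
  with ab(3) obtain s where s: "m1 = [s]" "w {v, s} \<le> w {u, v}" "w {s, u} \<le> w {u, v}"
    using triangle by auto
  have len: "4 \<le> length cyc"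
    using s interiors_nonempty(2) by (simp add: Suc_le_eq length_greater_0_conv)
  have index: "i = 0 \<or> i = 2" if "i < length cyc" "cyc ! i \<in> {u, v}" for i
  proof -
    have "cyc ! 0 = v" "cyc ! 2 = u" "2 < length cyc"
      using s len by auto
    then show ?thesis
      using that nth_eq_iff_index_eq[OF distinct_cyc, of i 0] nth_eq_iff_index_eq[OF distinct_cyc, of i 2]
      by auto
  qed
  have "a = 0" "b = 2"
    using index[of a] index[of b] ab(1,2) chord by (auto simp: doubleton_eq_iff)
  then have "{a..<b} = {0, 1}" "{cyc ! a, cyc ! b} = {u, v}"
    using s by auto
  moreover have "cyc_edge cyc 0 = {v, s}" "cyc_edge cyc 1 = {s, u}"
    using s len by (auto simp: cyc_edge_def)
  ultimately have "\<forall>j\<in>{a..<b}. w (cyc_edge cyc j) \<le> w {cyc ! a, cyc ! b}"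
    using s by simp
  then show "covers w cyc a b"
    by (simp add: covers_def)
qed

lemma violated_cycle_cyc:
  fixes w :: "'a set \<Rightarrow> real"
  assumes "S \<subseteq> V" "u \<in> V" "v \<in> V" "r \<in> S"
    and "{u, v} \<in> F \<Longrightarrow> \<exists>s. m1 = [s] \<and> w {v, s} \<le> w {u, v} \<and> w {s, u} \<le> w {u, v}"
  shows "violated_cycle w V F r cyc"
proof -
  obtain x1 x2 where x: "x1 \<in> set m1" "x2 \<in> set m2"
    using interiors_nonempty by (meson list.set_sel(1))
  then have x_C: "x1 \<in> C1" "x2 \<in> C2"
    using path1(2) path2(2) by auto
  then have "x1 \<noteq> x2" "{x1, x2} \<notin> F"
    using C1_C2_disjoint no_edge_between by auto
  then have nonadjacent: "\<exists>x\<in>set cyc. \<exists>y\<in>set cyc. x \<noteq> y \<and> {x, y} \<notin> F"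
    using x by auto
  have "\<exists>x\<in>set cyc. x \<noteq> r \<and> {r, x} \<notin> F"
  proof (cases "r \<in> C2")
    case True
    then have "x1 \<noteq> r" "{r, x1} \<notin> F"
      using x_C C1_C2_disjoint no_edge_between[of x1 r] by (auto simp: insert_commute)
    then show ?thesis
      using x(1) by auto
  next
    case False
    have "{r, x2} \<notin> F"
    proof
      assume "{r, x2} \<in> F"
      then have "r \<in> component S F x2"
        using assms(4) x_C(2) components_subset_S(2) component_edge[of x2 S r F]
        by (auto simp: insert_commute)
      then show False
        using False component_of_mem_components[OF components(2) x_C(2)] by simp
    qed
    then show ?thesis
      using x(2) x_C(2) False by auto
  qed
  then show ?thesis
    unfolding violated_cycle_def
    using is_cycle_cyc[OF assms(1-3)] well_covered_cyc[OF assms(5)] nonadjacent by blast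
qed

end

lemma induced_path_triangle:
  assumes "s \<notin> {u, v}" "u \<noteq> v" "{v, s} \<in> F" "{s, u} \<in> F"
  shows "induced_path (F - {{u, v}}) [v, s, u]"
  using assms by (auto simp: induced_path_def doubleton_eq_iff insert_commute)

lemma violated_cycle_through_touching_components:
  fixes w :: "'a set \<Rightarrow> real"
  assumes S: "S \<subseteq> V" "r \<in> S" "u \<in> V" "v \<in> V" "u \<notin> S" "v \<notin> S" "u \<noteq> v"
    and s: "s \<in> S" "w {s, u} \<le> w {u, v}" "w {s, v} \<le> w {u, v}"
    and triangle: "{u, v} \<in> F \<longrightarrow> {s, u} \<in> F \<and> {v, s} \<in> F"
    and C: "C1 \<in> touching S F u \<inter> touching S F v" "C2 \<in> touching S F u \<inter> touching S F v" "C1 \<noteq> C2"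
    and C1_s: "{u, v} \<in> F \<Longrightarrow> C1 = component S F s"
  shows "\<exists>cs. violated_cycle w V F r cs"
proof -
  (* If uv is present, the first path is v-s-u, so that the triangle covers the chord uv. *)
  obtain m1 where m1: "set m1 \<subseteq> C1" "induced_path (F - {{u, v}}) (v # m1 @ [u])"
    and m1_s: "{u, v} \<in> F \<Longrightarrow> m1 = [s]"
  proof (cases "{u, v} \<in> F")
    case True
    have "s \<notin> {u, v}"
      using s(1) S(5,6) by blast
    then have "induced_path (F - {{u, v}}) (v # [s] @ [u])"
      using induced_path_triangle[of s u v F] triangle True S(7) by simp
    then show ?thesis
      using that[of "[s]"] C1_s[OF True] by simp
  next
    case False
    then show ?thesis
      using induced_path_through_component[OF C(1) S(5-7)] that by metis
  qed
  obtain m2 where m2: "set m2 \<subseteq> C2" "induced_path (F - {{u, v}}) (v # m2 @ [u])"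
    using induced_path_through_component[OF C(2) S(5-7)] .
  have "C1 \<in> components S F" "C2 \<in> components S F"
    using C(1,2) touching_subset_components[of S F u] by auto
  then interpret two_paths_through_components S F u v C1 C2 m1 m2
    by unfold_locales (use C(3) S(5-7) m1 m2 in auto)
  have "violated_cycle w V F r cyc"
    using violated_cycle_cyc[OF S(1,3,4,2)] m1_s s(2,3) by (simp add: insert_commute)
  then show ?thesis
    by blast
qed

lemma at_most_one_component_touching_both:
  fixes w :: "'a set \<Rightarrow> real"
  assumes S: "S \<subseteq> V" "r \<in> S" "u \<in> V" "v \<in> V" "u \<notin> S" "v \<notin> S" "u \<noteq> v"
    and s: "s \<in> S" "w {s, u} \<le> w {u, v}" "w {s, v} \<le> w {u, v}"
    and triangle: "{u, v} \<in> F \<longrightarrow> {s, u} \<in> F \<and> {v, s} \<in> F"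
    and no_violated: "\<nexists>cs. violated_cycle w V F r cs"
  shows "\<forall>C1\<in>touching S F u \<inter> touching S F v. \<forall>C2\<in>touching S F u \<inter> touching S F v. C1 = C2"
proof (intro ballI, rule ccontr)
  let ?K = "touching S F u \<inter> touching S F v"
  note violated = violated_cycle_through_touching_components[OF S s triangle]
  fix C1 C2 assume C: "C1 \<in> ?K" "C2 \<in> ?K" "C1 \<noteq> C2"
  show False
  proof (cases "{u, v} \<in> F")
    case True
    then have "component S F s \<in> ?K"
      using triangle True s(1) S(1) by (auto intro: component_in_touching simp: insert_commute)
    moreover obtain C where "C \<in> ?K" "C \<noteq> component S F s"
      using C by blast
    ultimately show False
      using violated[of "component S F s" C] no_violated by blast
  next
    case False
    then show False
      using violated[OF C] no_violated by blast
  qed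
qed

section \<open>Vanishing of f_uv\<close>

lemma num_components_modular_thr_edges:
  fixes w :: "'a set \<Rightarrow> real"
  assumes S: "finite S" "S \<subseteq> V" "r \<in> S" "u \<in> V" "v \<in> V" "u \<notin> S" "v \<notin> S" "u \<noteq> v"
    and s: "s \<in> S" "w {s, u} \<le> w {u, v}" "w {s, v} \<le> w {u, v}"
    and no_violated: "\<nexists>cs. violated_cycle w V (thr_edges w V t) r cs"
  defines "F \<equiv> thr_edges w V t"
  shows "num_components (insert u S) F + num_components (insert v S) F
    = num_components S F + num_components (insert u (insert v S)) F"
proof (rule num_components_insert_two_vertices[OF S(1,6-8)])
  have triangle: "{u, v} \<in> F \<longrightarrow> {s, u} \<in> F \<and> {v, s} \<in> F"
    using s S by (auto simp: F_def thr_edges_def insert_in_all_edges_iff insert_commute)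
  then show "touching S F u \<inter> touching S F v \<noteq> {}" if "{u, v} \<in> F"
    using that s(1) S(2) component_in_touching[of s S u F] component_in_touching[of s S v F]
    by (auto simp: insert_commute)
  have "\<forall>C1\<in>touching S F u \<inter> touching S F v. \<forall>C2\<in>touching S F u \<inter> touching S F v. C1 = C2"
    using at_most_one_component_touching_both[OF S(2-8) s triangle] no_violated
    unfolding F_def by blast
  then show "card (touching S F u \<inter> touching S F v) \<le> 1"
    using finite_touching[OF S(1), of F u] by (simp add: card_le_Suc0_iff_eq)
qed

lemma components_thr_edges_restrict:
  assumes "X \<subseteq> V"
  shows "components X (thr_edges w V t) = components X (thr_edges w X t)"
proof -
  have "edge_rel X (thr_edges w V t) = edge_rel X (thr_edges w X t)"
    using assms by (auto simp: edge_rel_def thr_edges_def insert_in_all_edges_iff)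
  then show ?thesis
    by (simp add: components_def component_def)
qed

lemma f_uv_eq_sum_gaps:
  fixes w :: "'a set \<Rightarrow> real"
  assumes "finite V" "S \<subseteq> V" "S \<noteq> {}" "u \<in> V" "v \<in> V" "u \<notin> S" "v \<notin> S" "u \<noteq> v"
  defines "W \<equiv> w ` all_edges V"
    and "nc \<equiv> \<lambda>X t. real (num_components X (thr_edges w V t))"
  shows "f_uv w u v S = (\<Sum>t\<in>W. gap_to_next W t *
    (nc (insert u S) t + nc (insert v S) t - nc S t - nc (insert u (insert v S)) t))"
proof -
  have "finite W"
    using finite_all_edges[OF assms(1)] by (simp add: W_def)
  have mst: "mst w X = Min W * (real (card X) - 1) + (\<Sum>t\<in>W. gap_to_next W t * (nc X t - 1))"
    if "X \<subseteq> V" "X \<noteq> {}" for X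
  proof -
    have "w ` all_edges X \<subseteq> W"
      using all_edges_mono[OF that(1)] by (auto simp: W_def)
    then show ?thesis
      using mst_eq_layer_cake[OF finite_subset[OF that(1) assms(1)] that(2) \<open>finite W\<close>]
      unfolding nc_def components_thr_edges_restrict[OF that(1)] by simp
  qed
  have "finite S"
    using assms(1,2) finite_subset by blast
  then have "card (insert u S) = card S + 1" "card (insert v S) = card S + 1"
      "card (insert u (insert v S)) = card S + 2"
    using assms(6-8) by auto
  then show ?thesis
    unfolding f_uv_def using assms(2-5)
    by (simp add: mst algebra_simps sum.distrib sum_subtractf)
qed

lemma f_uv_eq_0_if_num_components_modular:
  fixes w :: "'a set \<Rightarrow> real"
  assumes S: "finite V" "S \<subseteq> V" "S \<noteq> {}" "u \<in> V" "v \<in> V" "u \<notin> S" "v \<notin> S" "u \<noteq> v"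
    and modular: "\<And>t. t \<in> w ` all_edges V \<Longrightarrow> t < Max (w ` all_edges V) \<Longrightarrow>
      num_components (insert u S) (thr_edges w V t) + num_components (insert v S) (thr_edges w V t)
      = num_components S (thr_edges w V t) + num_components (insert u (insert v S)) (thr_edges w V t)"
  shows "f_uv w u v S = 0"
proof -
  let ?W = "w ` all_edges V" and ?nc = "\<lambda>X t. real (num_components X (thr_edges w V t))"
  have "finite ?W"
    using finite_all_edges[OF S(1)] by simp
  have "gap_to_next ?W t * (?nc (insert u S) t + ?nc (insert v S) t - ?nc S t
      - ?nc (insert u (insert v S)) t) = 0" if "t \<in> ?W" for t
  proof (cases "t < Max ?W")
    case True
    then show ?thesis
      using modular[OF that True] by (simp add: algebra_simps flip: of_nat_add)
  next
    case False
    then have "\<not> (\<exists>t'\<in>?W. t < t')"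
      using Max_ge[OF \<open>finite ?W\<close>] by fastforce
    then show ?thesis
      by (simp add: gap_to_next_def)
  qed
  then show ?thesis
    using f_uv_eq_sum_gaps[OF S, of w] by (simp add: sum.neutral)
qed

theorem lemma5:
  fixes N :: "'a set" and r u v :: 'a and w :: "'a set \<Rightarrow> real" and S :: "'a set"
  assumes "finite N" and "r \<notin> N"
    and no_viol: "\<forall>c \<in> w ` all_edges (insert r N). c < Max (w ` all_edges (insert r N)) \<longrightarrow>
        (\<nexists>cs. violated_cycle w (insert r N) (thr_edges w (insert r N) c) r cs)"
    and "u \<in> N" and "v \<in> N" and "u \<noteq> v"
    and "S \<in> S_fam (insert r N) r u v"
    and "\<not> S \<subseteq> exp_nbhd w (insert r N) u v"
  shows "f_uv w u v S = 0"
proof -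
  let ?V = "insert r N"
  have S: "S \<subseteq> ?V" "r \<in> S" "u \<notin> S" "v \<notin> S" and uv: "u \<in> ?V" "v \<in> ?V"
    using assms(4,5,7) by (auto simp: S_fam_def)
  have fin: "finite ?V" "finite S"
    using assms(1) S(1) finite_subset by auto
  obtain s where "s \<in> S" "s \<notin> exp_nbhd w ?V u v"
    using assms(8) by blast
  then have s: "s \<in> S" "w {s, u} \<le> w {u, v}" "w {s, v} \<le> w {u, v}"
    using S by (auto simp: exp_nbhd_def)
  have "S \<noteq> {}"
    using S(2) by blast
  then show ?thesis
  proof (rule f_uv_eq_0_if_num_components_modular[OF fin(1) S(1) _ uv S(3,4) assms(6)])
    fix t assume "t \<in> w ` all_edges ?V" "t < Max (w ` all_edges ?V)"
    then show "num_components (insert u S) (thr_edges w ?V t) + num_components (insert v S) (thr_edges w ?V t)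
      = num_components S (thr_edges w ?V t) + num_components (insert u (insert v S)) (thr_edges w ?V t)"
      using num_components_modular_thr_edges[OF fin(2) S(1,2) uv S(3,4) assms(6) s] no_viol by blast
  qed
qed

end
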